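(* Consider the stochastic energy exchange model, the set $G$, the return times $T_n$ and the induced chain $\hat{\mathbf{E}}_n$ described in the context, and let $\hat V=\max\{V,1\}$ and $\hat\alpha=2-2\eta$. There exists a constant $C_5$ such that $$\mathbb{E}\big[(T_{n+1}-T_n)^{\hat\alpha}\mid\hat{\mathbf{E}}_n\big]\le C_5\hat V(\hat{\mathbf{E}}_n)$$ for every $\hat{\mathbf{E}}_n$ and every $n\ge0$. In particular, if $n\ge1$ then $\mathbb{E}[(T_{n+1}-T_n)^{\hat\alpha}\mid\hat{\mathbf{E}}_n]\le C_5M_0$.
   Context: Fix $N\ge1$, $T_L,T_R>0$, a sufficiently large $K$ ($K\gg T_L,T_R$) and $R(a,b)=\min\{K,\sqrt{\min(a,b)}\}$. The stochastic energy exchange model is the Markov jump process $\mathbf{E}_t=(E_1(t),\dots,E_N(t))$ on $\mathbb{R}^N_+$: for $i=1,\dots,N-1$ a clock of rate $R(E_i,E_{i+1})$ on sites $i,i+1$; when it rings $(E_i,E_{i+1})\mapsto(p(E_i+E_{i+1}),(1-p)(E_i+E_{i+1}))$, $p$ uniform on $(0,1)$; a clock of rate $R(T_L,E_1)$ (resp. $R(E_N,T_R)$) with $E_1\mapsto p(E_1+X_L)$ (resp. $E_N\mapsto p(E_N+X_R)$), $X_L,X_R$ exponential with means $T_L,T_R$; all independent. $P^t$ is its transition kernel. Let $a_m=1-\frac{2^{m-1}-1}{2^N-1}$, and for small $\eta>0$, $V(\mathbf{E})=\sum_{m=1}^N\sum_{k=1}^{N-m+1}\big(\sum_{j=0}^{m-1}E_{k+j}\big)^{a_m\eta-1}$.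 Fix sufficiently small $\eta>0$ and $h>0$, and a constant $M_0>1$ such that $P^hV(\mathbf{E})-V(\mathbf{E})\le-c_0V(\mathbf{E})^{\alpha}$ whenever $V(\mathbf{E})>M_0$, for some $c_0>0$, $\alpha=1-\frac{1}{2(1-\eta)}$. Let $G=\{\mathbf{E}:V(\mathbf{E})\le M_0\}$. With the time-$h$ sampling chain $\mathbf{E}_n:=\mathbf{E}_{nh}$, let $T_0=0$, $T_{n+1}=\inf\{k>T_n:\mathbf{E}_{kh}\in G\}$ and $\hat{\mathbf{E}}_n=\mathbf{E}_{T_nh}$. *)

theory Defs
  imports "HOL-Analysis.Analysis"
begin

text \<open>States: functions nat => real, site i of the paper is index i-1 (i < N).
  Nonnegative test functions are ennreal-valued; kernels are given as operators
  f |-> (x |-> integral of f against the kernel at x).\<close>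

type_synonym state = "nat \<Rightarrow> real"

definition rate :: "real \<Rightarrow> real \<Rightarrow> real \<Rightarrow> real" where
  "rate K a b = min K (sqrt (min a b))"

definition unif_int :: "(real \<Rightarrow> ennreal) \<Rightarrow> ennreal" where
  "unif_int g = (\<integral>\<^sup>+ p. indicator {0<..<1} p * g p \<partial>lborel)"

definition exp_int :: "real \<Rightarrow> (real \<Rightarrow> ennreal) \<Rightarrow> ennreal" where
  "exp_int T g = (\<integral>\<^sup>+ X. indicator {0<..} X * ennreal (exp (- X / T) / T) * g X \<partial>lborel)"

definition bond_jump :: "nat \<Rightarrow> (state \<Rightarrow> ennreal) \<Rightarrow> state \<Rightarrow> ennreal" where
  "bond_jump i f x = unif_int (\<lambda>p. f (x(i := p * (x i + x (Suc i)),
                                       Suc i := (1 - p) * (x i + x (Suc i)))))"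

definition left_jump :: "real \<Rightarrow> (state \<Rightarrow> ennreal) \<Rightarrow> state \<Rightarrow> ennreal" where
  "left_jump TL f x = unif_int (\<lambda>p. exp_int TL (\<lambda>X. f (x(0 := p * (x 0 + X)))))"

definition right_jump :: "nat \<Rightarrow> real \<Rightarrow> (state \<Rightarrow> ennreal) \<Rightarrow> state \<Rightarrow> ennreal" where
  "right_jump N TR f x = unif_int (\<lambda>p. exp_int TR (\<lambda>X. f (x(N - 1 := p * (x (N - 1) + X)))))"

text \<open>Total jump rate; all N+1 clocks have rate at most K, so Lambda = (N+1) K
  is a uniformization constant.\<close>
definition total_rate :: "nat \<Rightarrow> real \<Rightarrow> real \<Rightarrow> real \<Rightarrow> state \<Rightarrow> real" where
  "total_rate N TL TR K x =
     (\<Sum>i<N - 1. rate K (x i) (x (Suc i))) + rate K TL (x 0) + rate K (x (N - 1)) TR"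

definition unif_const :: "nat \<Rightarrow> real \<Rightarrow> real" where
  "unif_const N K = real (N + 1) * K"

definition Jop :: "nat \<Rightarrow> real \<Rightarrow> real \<Rightarrow> real \<Rightarrow> (state \<Rightarrow> ennreal) \<Rightarrow> state \<Rightarrow> ennreal" where
  "Jop N TL TR K f x =
     (let L = unif_const N K in
       (\<Sum>i<N - 1. ennreal (rate K (x i) (x (Suc i)) / L) * bond_jump i f x)
       + ennreal (rate K TL (x 0) / L) * left_jump TL f x
       + ennreal (rate K (x (N - 1)) TR / L) * right_jump N TR f x
       + ennreal (1 - total_rate N TL TR K x / L) * f x)"

text \<open>Transition kernel P^t of the jump process (via uniformization):
  P^t f = sum_k e^{-L t} (L t)^k / k! J^k f.\<close>
definition Pt :: "nat \<Rightarrow> real \<Rightarrow> real \<Rightarrow> real \<Rightarrow> real \<Rightarrow> (state \<Rightarrow> ennreal) \<Rightarrow> state \<Rightarrow> ennreal" where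
  "Pt N TL TR K t f x =
     (\<Sum>k. ennreal (exp (- unif_const N K * t) * (unif_const N K * t) ^ k / fact k)
            * (Jop N TL TR K ^^ k) f x)"

definition a_coef :: "nat \<Rightarrow> nat \<Rightarrow> real" where
  "a_coef N m = 1 - (2 ^ (m - 1) - 1) / (2 ^ N - 1)"

definition Vfun :: "nat \<Rightarrow> real \<Rightarrow> state \<Rightarrow> real" where
  "Vfun N \<eta> x = (\<Sum>m\<in>{1..N}. \<Sum>k<N - m + 1.
                   (\<Sum>j<m. x (k + j)) powr (a_coef N m * \<eta> - 1))"

definition pos_state :: "nat \<Rightarrow> state \<Rightarrow> bool" where
  "pos_state N x \<longleftrightarrow> (\<forall>i<N. 0 < x i)"

text \<open>For the time-h chain and a set G:
  surv k x = P_x(X_1,...,X_k not in G),  hitp k x = P_x(tau_G = k+1),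
  where tau_G = inf {k >= 1. X_k in G}.\<close>
fun surv :: "((state \<Rightarrow> ennreal) \<Rightarrow> state \<Rightarrow> ennreal) \<Rightarrow> state set \<Rightarrow> nat \<Rightarrow> state \<Rightarrow> ennreal" where
  "surv P G 0 x = 1"
| "surv P G (Suc k) x = P (\<lambda>y. indicator (- G) y * surv P G k y) x"

fun hitp :: "((state \<Rightarrow> ennreal) \<Rightarrow> state \<Rightarrow> ennreal) \<Rightarrow> state set \<Rightarrow> nat \<Rightarrow> state \<Rightarrow> ennreal" where
  "hitp P G 0 x = P (indicator G) x"
| "hitp P G (Suc k) x = P (\<lambda>y. indicator (- G) y * hitp P G k y) x"

text \<open>E_x[tau_G ^ b] (value infinity if tau_G = infinity with positive probability).\<close>
definition return_moment ::
  "((state \<Rightarrow> ennreal) \<Rightarrow> state \<Rightarrow> ennreal) \<Rightarrow> state set \<Rightarrow> real \<Rightarrow> state \<Rightarrow> ennreal" where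
  "return_moment P G b x =
     (\<Sum>k. ennreal (real (Suc k) powr b) * hitp P G k x) + \<infinity> * (INF k. surv P G k x)"

end

theory Submission
  imports Defs
begin

(* The drift hypothesis P V + c0 V^(1-1/b) <= V off G, with b = 2 - 2 eta, is a polynomial drift
   condition in the sense of Jarner and Roberts. With c = c0/(2b), concavity of
   w |-> (w^(1/b) + a)^b and convexity of t |-> t^b turn it into the family of inequalities
   P(1_{G^c} W_(j+1)) + r_j <= W_j off G, where W_j = (V^(1/b) + c j)^b and r_j ~ (j+1)^(b-1).
   Iterating along the chain killed on G gives sum_j r_j P_x(tau > j) <= C max(V(x), 1), and
   summation by parts turns this into E_x[tau^b] <= C' max(V(x), 1); in particular tau is
   almost surely finite. The model enters only through two facts about P^h, a Poisson mixture of
   powers of the jump operator J of the uniformized chain: it is a sub-Markov operator on positive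
   states, and P^h V <= C V because J V <= (4/eta) V. The latter holds since every jump multiplies
   the affected partial sums of energies by at least p or 1 - p with p uniform on (0,1), and
   E[p^(eta/2 - 1)] = 2/eta. *)

lemma powr_above_tangent:
  fixes b t u :: real
  assumes "1 \<le> b" "0 < t" "0 < u"
  shows "t powr b + b * t powr (b - 1) * (u - t) \<le> u powr b"
proof -
  have "b * t powr (b - 1) * (u - t) \<le> u powr b - t powr b"
    using assms
    by (intro convex_on_imp_above_tangent[OF powr_convex])
       (auto intro!: derivative_eq_intros simp: interior_open)
  then show ?thesis by simp
qed

lemma shifted_root_power_has_derivative:
  fixes a b x :: real
  assumes b: "1 \<le> b" and a: "0 \<le> a" and x: "0 < x"
  shows "((\<lambda>x. (x powr (1/b) + a) powr b) has_real_derivative (1 + a * x powr (-1/b)) powr (b - 1)) (at x)"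
proof -
  have pos: "0 < x powr (1/b) + a" using x a by (simp add: add_pos_nonneg)
  have "x powr (1/b - 1) = (x powr (-1/b)) powr (b - 1)"
  proof -
    have "1/b - 1 = -1/b * (b - 1)" using b by (simp add: field_simps)
    then show ?thesis by (simp only: powr_powr)
  qed
  moreover have "(x powr (1/b) + a) * x powr (-1/b) = 1 + a * x powr (-1/b)"
    using x by (simp add: distrib_right powr_add[symmetric])
  ultimately have "b * (x powr (1/b) + a) powr (b - 1) * (1/b * x powr (1/b - 1))
      = (1 + a * x powr (-1/b)) powr (b - 1)"
    using b x pos by (simp add: powr_mult[symmetric])
  moreover have "((\<lambda>x. (x powr (1/b) + a) powr b) has_real_derivative
      b * (x powr (1/b) + a) powr (b - 1) * (1/b * x powr (1/b - 1))) (at x)"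
    using x pos b by (auto intro!: derivative_eq_intros)
  ultimately show ?thesis by simp
qed

lemma concave_on_shifted_root_power:
  fixes a b :: real
  assumes b: "1 \<le> b" and a: "0 \<le> a"
  shows "concave_on {0<..} (\<lambda>x. (x powr (1/b) + a) powr b)"
  unfolding concave_on_def
proof (rule convex_on_realI[where f' = "\<lambda>x. - ((1 + a * x powr (-1/b)) powr (b - 1))"])
  show "((\<lambda>x. - ((x powr (1/b) + a) powr b)) has_real_derivative - ((1 + a * x powr (-1/b)) powr (b - 1))) (at x)"
    if "x \<in> {0<..}" for x
    using shifted_root_power_has_derivative[OF b a] that by (auto intro: DERIV_minus)
  show "- ((1 + a * x powr (-1/b)) powr (b - 1)) \<le> - ((1 + a * y powr (-1/b)) powr (b - 1))"
    if "x \<in> {0<..}" "x \<le> y" for x y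
  proof -
    have "y powr (-1/b) \<le> x powr (-1/b)"
      using that b by (intro powr_mono2') auto
    then have "1 + a * y powr (-1/b) \<le> 1 + a * x powr (-1/b)"
      using a by (simp add: mult_left_mono)
    then show ?thesis
      using that a b by (simp add: add_pos_nonneg powr_mono2)
  qed
qed simp

lemma shifted_root_power_below_tangent:
  fixes a b s w :: real
  assumes b: "1 \<le> b" and a: "0 \<le> a" and s: "0 < s" and w: "0 < w"
  shows "(w powr (1/b) + a) powr b \<le> a * (s + a) powr (b - 1) + ((s + a) / s) powr (b - 1) * w"
proof -
  define g where "g x = (x powr (1/b) + a) powr b" for x
  define v where "v = s powr b"
  have v: "0 < v" using s by (simp add: v_def)
  have sv: "v powr (1/b) = s" "v powr (-1/b) = 1 / s"
    using s b by (simp_all add: v_def powr_powr powr_minus_divide)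
  have "((\<lambda>x. - g x) has_real_derivative - (((s + a) / s) powr (b - 1))) (at v within {0<..})"
  proof -
    have "1 + a * (1 / s) = (s + a) / s" using s by (simp add: field_simps)
    then show ?thesis
      using shifted_root_power_has_derivative[OF b a v] unfolding g_def sv(2)
      by (auto intro: DERIV_minus has_field_derivative_at_within)
  qed
  then have "- (((s + a) / s) powr (b - 1)) * (w - v) \<le> - g w - - g v"
    using concave_on_shifted_root_power[OF b a] v w unfolding concave_on_def g_def
    by (intro convex_on_imp_above_tangent) (auto simp: interior_open)
  moreover have "g v = (s + a) powr (b - 1) * (s + a)"
    using powr_add[of "s + a" "b - 1" 1] s a by (simp add: g_def sv)
  moreover have "((s + a) / s) powr (b - 1) * v = (s + a) powr (b - 1) * s"
  proof -
    have "v = s powr (b - 1) * s"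
      using powr_add[of s "b - 1" 1] s by (simp add: v_def)
    moreover have "((s + a) / s) powr (b - 1) * s powr (b - 1) = (s + a) powr (b - 1)"
      using s a by (simp add: powr_divide add_pos_nonneg)
    ultimately show ?thesis by (metis mult.assoc)
  qed
  ultimately show ?thesis by (simp add: g_def algebra_simps)
qed

lemma drift_step_real:
  fixes b c u s p :: real
  assumes b: "1 \<le> b" and c: "0 < c" and u: "0 \<le> u" and s: "0 < s" and p: "0 \<le> p"
    and drift: "p + 2 * b * c * s powr (b - 1) \<le> s powr b"
  defines "a \<equiv> u + c"
  shows "a * (s + a) powr (b - 1) + ((s + a) / s) powr (b - 1) * p + b * c * a powr (b - 1)
           \<le> (s + u) powr b"
proof -
  define T where "T = (s + a) powr (b - 1)"
  define B where "B = ((s + a) / s) powr (b - 1)"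
  have a: "0 < a" using u c by (simp add: a_def)
  have B: "0 \<le> B" by (simp add: B_def)
  have BT: "B * s powr (b - 1) = T"
    using s a by (simp add: B_def T_def powr_divide)
  have "B * p \<le> B * (s powr b - 2 * b * c * s powr (b - 1))"
    using drift B by (intro mult_left_mono) auto
  also have "\<dots> = T * s - 2 * b * c * T"
    using powr_add[of s "b - 1" 1] s BT by (simp add: algebra_simps flip: BT)
  finally have Bp: "B * p \<le> T * s - 2 * b * c * T" .
  have "(s + a) powr b + b * T * ((s + u) - (s + a)) \<le> (s + u) powr b"
    unfolding T_def using b s a u by (intro powr_above_tangent) auto
  moreover have "(s + a) powr b = T * (s + a)"
    using powr_add[of "s + a" "b - 1" 1] s a by (simp add: T_def)
  moreover have "b * T * ((s + u) - (s + a)) = - (b * c * T)"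
    by (simp add: a_def algebra_simps)
  ultimately have tangent: "T * (s + a) - b * c * T \<le> (s + u) powr b" by simp
  have "b * c * a powr (b - 1) \<le> b * c * T"
    unfolding T_def using a s b c by (intro mult_left_mono powr_mono2) auto
  then have "a * T + B * p + b * c * a powr (b - 1) \<le> (s + u) powr b"
    using Bp tangent by (simp add: algebra_simps)
  then show ?thesis by (simp add: T_def B_def)
qed

lemma powr_Suc_diff_le:
  fixes b :: real
  assumes "1 \<le> b"
  shows "real (Suc j) powr b - real j powr b \<le> b * real (Suc j) powr (b - 1)"
proof (cases j)
  case 0
  then show ?thesis using assms by simp
next
  case (Suc i)
  then have "real (Suc j) powr b + b * real (Suc j) powr (b - 1) * (real j - real (Suc j))
      \<le> real j powr b"
    using assms by (intro powr_above_tangent) auto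
  then show ?thesis by (simp add: algebra_simps)
qed

lemma ennreal_abel_summation_le:
  fixes h s :: "nat \<Rightarrow> ennreal" and \<phi> :: "nat \<Rightarrow> real"
  assumes step: "\<And>k. h k + s (Suc k) \<le> s k" and \<phi>: "mono \<phi>" "\<phi> 0 = 0"
  shows "(\<Sum>k<n. ennreal (\<phi> (Suc k)) * h k) + ennreal (\<phi> n) * s n
           \<le> (\<Sum>k<n. ennreal (\<phi> (Suc k) - \<phi> k) * s k)"
proof (induction n)
  case 0
  then show ?case using \<phi>(2) by simp
next
  case (Suc n)
  have "0 \<le> \<phi> n" "\<phi> n \<le> \<phi> (Suc n)"
    using \<phi> monoD[OF \<phi>(1), of 0 n] monoD[OF \<phi>(1), of n "Suc n"] by auto
  then have split: "ennreal (\<phi> (Suc n)) = ennreal (\<phi> n) + ennreal (\<phi> (Suc n) - \<phi> n)"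
    by (simp flip: ennreal_plus)
  have "(\<Sum>k<Suc n. ennreal (\<phi> (Suc k)) * h k) + ennreal (\<phi> (Suc n)) * s (Suc n)
      = (\<Sum>k<n. ennreal (\<phi> (Suc k)) * h k) + ennreal (\<phi> (Suc n)) * (h n + s (Suc n))"
    by (simp add: distrib_left add.assoc)
  also have "\<dots> \<le> (\<Sum>k<n. ennreal (\<phi> (Suc k)) * h k) + ennreal (\<phi> (Suc n)) * s n"
    using step by (intro add_left_mono mult_left_mono) auto
  also have "\<dots> = (\<Sum>k<n. ennreal (\<phi> (Suc k)) * h k) + ennreal (\<phi> n) * s n
      + ennreal (\<phi> (Suc n) - \<phi> n) * s n"
    by (simp only: split distrib_right add.assoc)
  also have "\<dots> \<le> (\<Sum>k<Suc n. ennreal (\<phi> (Suc k) - \<phi> k) * s k)"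
    using Suc.IH by (simp add: add_right_mono)
  finally show ?case .
qed

section \<open>Sub-Markov operators\<close>

(* P f x stands for the integral of f against a sub-probability kernel P(x, -) carried by S,
   which is why monotonicity is only required on S. *)
locale sub_markov_operator =
  fixes P :: "('a \<Rightarrow> ennreal) \<Rightarrow> 'a \<Rightarrow> ennreal" and M :: "'a measure" and S :: "'a set"
  assumes measurable_P: "f \<in> borel_measurable M \<Longrightarrow> P f \<in> borel_measurable M"
    and additive: "f \<in> borel_measurable M \<Longrightarrow> g \<in> borel_measurable M \<Longrightarrow>
      P (\<lambda>y. f y + g y) x = P f x + P g x"
    and homogeneous: "f \<in> borel_measurable M \<Longrightarrow> P (\<lambda>y. c * f y) x = c * P f x"
    and monotone: "(\<And>y. y \<in> S \<Longrightarrow> f y \<le> g y) \<Longrightarrow> x \<in> S \<Longrightarrow> P f x \<le> P g x"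
    and unit_le: "x \<in> S \<Longrightarrow> P (\<lambda>_. 1) x \<le> 1"
begin

lemma zero: "P (\<lambda>_. 0) x = 0"
  using homogeneous[of "\<lambda>_. 0" 0 x] by simp

lemma sum:
  assumes "finite I" "\<And>i. i \<in> I \<Longrightarrow> f i \<in> borel_measurable M"
  shows "P (\<lambda>y. \<Sum>i\<in>I. f i y) x = (\<Sum>i\<in>I. P (f i) x)"
  using assms by (induction I rule: finite_induct) (simp_all add: zero additive)

lemma affine_bound:
  assumes g: "g \<in> borel_measurable M" and x: "x \<in> S"
    and f: "\<And>z. z \<in> S \<Longrightarrow> f z \<le> A + B * g z"
  shows "P f x \<le> A + B * P g x"
proof -
  have "P f x \<le> P (\<lambda>z. A * 1 + B * g z) x"
    using f x by (intro monotone) auto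
  also have "\<dots> = P (\<lambda>z. A * 1) x + P (\<lambda>z. B * g z) x"
    using g by (intro additive) auto
  also have "\<dots> = A * P (\<lambda>_. 1) x + B * P g x"
    using g homogeneous[of "\<lambda>_. 1" A x] homogeneous[OF g, of B x] by simp
  also have "\<dots> \<le> A + B * P g x"
    using unit_le[OF x] by (intro add_right_mono mult_left_le) auto
  finally show ?thesis .
qed

lemma funpow: "sub_markov_operator (P ^^ k) M S"
proof (induction k)
  case 0
  show ?case by unfold_locales auto
next
  case (Suc k)
  then interpret Pk: sub_markov_operator "P ^^ k" M S .
  show ?case
  proof unfold_locales
    show "(P ^^ Suc k) f \<in> borel_measurable M" if "f \<in> borel_measurable M" for f
      using that by (simp add: measurable_P Pk.measurable_P)
    show "(P ^^ Suc k) (\<lambda>y. f y + g y) x = (P ^^ Suc k) f x + (P ^^ Suc k) g x"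
      if "f \<in> borel_measurable M" "g \<in> borel_measurable M" for f g x
    proof -
      have "(P ^^ k) (\<lambda>y. f y + g y) = (\<lambda>y. (P ^^ k) f y + (P ^^ k) g y)"
        using that by (simp add: Pk.additive fun_eq_iff)
      then show ?thesis using that by (simp add: additive Pk.measurable_P)
    qed
    show "(P ^^ Suc k) (\<lambda>y. c * f y) x = c * (P ^^ Suc k) f x"
      if "f \<in> borel_measurable M" for f c x
    proof -
      have "(P ^^ k) (\<lambda>y. c * f y) = (\<lambda>y. c * (P ^^ k) f y)"
        using that by (simp add: Pk.homogeneous fun_eq_iff)
      then show ?thesis using that by (simp add: homogeneous Pk.measurable_P)
    qed
    show "(P ^^ Suc k) f x \<le> (P ^^ Suc k) g x"
      if "\<And>y. y \<in> S \<Longrightarrow> f y \<le> g y" "x \<in> S" for f g x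
      using that by (simp add: Pk.monotone monotone)
    show "(P ^^ Suc k) (\<lambda>_. 1) x \<le> 1" if "x \<in> S" for x
    proof -
      have "(P ^^ Suc k) (\<lambda>_. 1) x \<le> P (\<lambda>_. 1) x"
        using that Pk.unit_le by (simp add: monotone)
      then show ?thesis using unit_le[OF that] by (rule order_trans)
    qed
  qed
qed

lemma funpow_linear_bound:
  assumes V: "V \<in> borel_measurable M" and bound: "\<And>x. x \<in> S \<Longrightarrow> P V x \<le> c * V x"
  shows "x \<in> S \<Longrightarrow> (P ^^ k) V x \<le> c ^ k * V x"
proof (induction k arbitrary: x)
  case 0
  then show ?case by simp
next
  case (Suc k)
  have "(P ^^ Suc k) V x \<le> P (\<lambda>y. c ^ k * V y) x"
    using Suc by (simp add: monotone)
  also have "\<dots> = c ^ k * P V x" using V by (rule homogeneous)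
  also have "\<dots> \<le> c ^ k * (c * V x)" using bound[OF Suc.prems] by (rule mult_left_mono) simp
  finally show ?case by (simp add: mult_ac)
qed

lemma funpow_mixture:
  assumes w: "\<And>k. 0 \<le> w k" "summable w" "suminf w \<le> 1"
  shows "sub_markov_operator (\<lambda>f x. \<Sum>k. ennreal (w k) * (P ^^ k) f x) M S"
proof unfold_locales
  note Pk = sub_markov_operator.measurable_P[OF funpow] sub_markov_operator.additive[OF funpow]
    sub_markov_operator.homogeneous[OF funpow] sub_markov_operator.monotone[OF funpow]
    sub_markov_operator.unit_le[OF funpow]
  show "(\<lambda>x. \<Sum>k. ennreal (w k) * (P ^^ k) f x) \<in> borel_measurable M"
    if "f \<in> borel_measurable M" for f
    using that by (intro borel_measurable_suminf_order borel_measurable_times_ennreal Pk(1)) auto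
  show "(\<Sum>k. ennreal (w k) * (P ^^ k) (\<lambda>y. f y + g y) x)
      = (\<Sum>k. ennreal (w k) * (P ^^ k) f x) + (\<Sum>k. ennreal (w k) * (P ^^ k) g x)"
    if "f \<in> borel_measurable M" "g \<in> borel_measurable M" for f g x
    using that by (simp add: Pk(2) distrib_left suminf_add[OF summableI summableI])
  show "(\<Sum>k. ennreal (w k) * (P ^^ k) (\<lambda>y. c * f y) x) = c * (\<Sum>k. ennreal (w k) * (P ^^ k) f x)"
    if "f \<in> borel_measurable M" for f c x
    using that by (simp add: Pk(3) mult.left_commute)
  show "(\<Sum>k. ennreal (w k) * (P ^^ k) f x) \<le> (\<Sum>k. ennreal (w k) * (P ^^ k) g x)"
    if "\<And>y. y \<in> S \<Longrightarrow> f y \<le> g y" "x \<in> S" for f g x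
    using that by (intro suminf_le summableI mult_left_mono Pk(4)) auto
  show "(\<Sum>k. ennreal (w k) * (P ^^ k) (\<lambda>_. 1) x) \<le> 1" if "x \<in> S" for x
  proof -
    have "(\<Sum>k. ennreal (w k) * (P ^^ k) (\<lambda>_. 1) x) \<le> (\<Sum>k. ennreal (w k))"
      using that by (intro suminf_le summableI mult_left_le Pk(5)) auto
    also have "\<dots> = ennreal (suminf w)" using w by (intro suminf_ennreal2) auto
    finally show ?thesis using w(3) by (simp add: order_trans)
  qed
qed

lemma funpow_mixture_linear_bound:
  assumes V: "V \<in> borel_measurable M" and bound: "\<And>x. x \<in> S \<Longrightarrow> P V x \<le> c * V x"
    and x: "x \<in> S"
  shows "(\<Sum>k. ennreal (w k) * (P ^^ k) V x) \<le> (\<Sum>k. ennreal (w k) * c ^ k) * V x"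
proof -
  have "ennreal (w k) * (P ^^ k) V x \<le> V x * (ennreal (w k) * c ^ k)" for k
  proof -
    have "ennreal (w k) * (P ^^ k) V x \<le> ennreal (w k) * (c ^ k * V x)"
      using funpow_linear_bound[OF V bound x] by (rule mult_left_mono) auto
    then show ?thesis by (simp add: mult_ac)
  qed
  then have "(\<Sum>k. ennreal (w k) * (P ^^ k) V x) \<le> (\<Sum>k. V x * (ennreal (w k) * c ^ k))"
    by (intro suminf_le summableI)
  then show ?thesis by (simp add: mult.commute)
qed

end

section \<open>Return-time moments under a polynomial drift condition\<close>

locale return_to_set = sub_markov_operator P M S
  for P :: "(state \<Rightarrow> ennreal) \<Rightarrow> state \<Rightarrow> ennreal" and M S +
  fixes G :: "state set"
  assumes G_sets: "G \<in> sets M"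
begin

lemma indicator_G_measurable[measurable]:
  "(indicator G :: state \<Rightarrow> ennreal) \<in> borel_measurable M"
  "(indicator (- G) :: state \<Rightarrow> ennreal) \<in> borel_measurable M"
proof -
  have "- G \<inter> space M = space M - G" by blast
  then show "(indicator (- G) :: state \<Rightarrow> ennreal) \<in> borel_measurable M"
    using G_sets by (simp add: borel_measurable_indicator_iff)
qed (rule borel_measurable_indicator[OF G_sets])

lemma surv_measurable[measurable]: "surv P G k \<in> borel_measurable M"
  by (induction k) (simp_all add: measurable_P)

lemma hitp_measurable[measurable]: "hitp P G k \<in> borel_measurable M"
  by (induction k) (simp_all add: measurable_P)

lemma hitp_plus_surv_Suc_le: "x \<in> S \<Longrightarrow> hitp P G k x + surv P G (Suc k) x \<le> surv P G k x"
proof (induction k arbitrary: x)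
  case 0
  have "hitp P G 0 x + surv P G 1 x = P (\<lambda>y. indicator G y + indicator (- G) y * 1) x"
    by (simp add: additive)
  also have "(\<lambda>y. indicator G y + indicator (- G) y * 1 :: ennreal) = (\<lambda>_. 1)"
    by (auto simp: fun_eq_iff indicator_def)
  finally show ?case using unit_le[OF 0] by simp
next
  case (Suc k)
  have "hitp P G (Suc k) x + surv P G (Suc (Suc k)) x
      = P (\<lambda>y. indicator (- G) y * hitp P G k y + indicator (- G) y * surv P G (Suc k) y) x"
    unfolding hitp.simps(2)[of P G k] surv.simps(2)[of P G "Suc k"]
    by (rule additive[symmetric]) measurable
  also have "\<dots> = P (\<lambda>y. indicator (- G) y * (hitp P G k y + surv P G (Suc k) y)) x"
    by (simp only: distrib_left)
  also have "\<dots> \<le> P (\<lambda>y. indicator (- G) y * surv P G k y) x"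
    using Suc by (intro monotone mult_left_mono) auto
  finally show ?case by simp
qed

lemma weighted_surv_sum_Suc:
  "(\<Sum>i<Suc n. ennreal (r (m + i)) * surv P G i x)
     = ennreal (r m) + P (\<lambda>y. indicator (- G) y * (\<Sum>i<n. ennreal (r (Suc m + i)) * surv P G i y)) x"
proof -
  have "(\<Sum>i<n. ennreal (r (Suc m + i)) * surv P G (Suc i) x)
      = P (\<lambda>y. \<Sum>i<n. ennreal (r (Suc m + i)) * (indicator (- G) y * surv P G i y)) x"
    by (simp add: sum homogeneous)
  also have "\<dots> = P (\<lambda>y. indicator (- G) y * (\<Sum>i<n. ennreal (r (Suc m + i)) * surv P G i y)) x"
    by (simp add: sum_distrib_left mult.left_commute)
  finally show ?thesis
    by (simp add: sum.lessThan_Suc_shift del: sum.lessThan_Suc)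
qed

end

locale polynomial_drift = return_to_set P M S G
  for P :: "(state \<Rightarrow> ennreal) \<Rightarrow> state \<Rightarrow> ennreal" and M S G +
  fixes V :: "state \<Rightarrow> real" and b c0 Ch :: real
  assumes V_measurable[measurable]: "V \<in> borel_measurable M"
    and V_nonneg: "\<And>x. 0 \<le> V x"
    and V_pos_outside: "\<And>x. x \<in> S \<Longrightarrow> x \<notin> G \<Longrightarrow> 0 < V x"
    and b: "1 \<le> b" and c0: "0 < c0" and Ch: "0 \<le> Ch"
    and V_growth: "\<And>x. x \<in> S \<Longrightarrow> P (\<lambda>y. ennreal (V y)) x \<le> ennreal (Ch * V x)"
    and drift: "\<And>x. x \<in> S \<Longrightarrow> x \<notin> G \<Longrightarrow>
      P (\<lambda>y. ennreal (V y)) x + ennreal (c0 * V x powr (1 - 1/b)) \<le> ennreal (V x)"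
begin

definition shift_step :: real where
  "shift_step = c0 / (2 * b)"

definition shifted_V :: "nat \<Rightarrow> state \<Rightarrow> ennreal" where
  "shifted_V j y = ennreal ((V y powr (1/b) + shift_step * j) powr b)"

definition drift_gain :: "nat \<Rightarrow> real" where
  "drift_gain j = b * shift_step * (shift_step * Suc j) powr (b - 1)"

lemma shift_step_pos: "0 < shift_step"
  using b c0 by (simp add: shift_step_def)

lemma drift_gain_pos: "0 < drift_gain j"
  using b shift_step_pos by (simp add: drift_gain_def)

lemma drift_gain_mono: "drift_gain 0 \<le> drift_gain j"
  unfolding drift_gain_def using b shift_step_pos
  by (intro mult_left_mono powr_mono2 mult_left_mono) auto

lemma P_outside_shifted_V_le:
  fixes j :: nat and s :: real
  assumes x: "x \<in> S" and s: "0 < s"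
  defines "a \<equiv> shift_step * Suc j"
  shows "P (\<lambda>z. indicator (- G) z * shifted_V (Suc j) z) x
           \<le> ennreal (a * (s + a) powr (b - 1)) + ennreal (((s + a) / s) powr (b - 1)) * P (\<lambda>y. ennreal (V y)) x"
proof (rule affine_bound[OF _ x])
  have a: "0 < a" using shift_step_pos by (simp add: a_def)
  fix z assume z: "z \<in> S"
  show "indicator (- G) z * shifted_V (Suc j) z
      \<le> ennreal (a * (s + a) powr (b - 1)) + ennreal (((s + a) / s) powr (b - 1)) * ennreal (V z)"
  proof (cases "z \<in> G")
    case False
    have "(V z powr (1/b) + a) powr b \<le> a * (s + a) powr (b - 1) + ((s + a) / s) powr (b - 1) * V z"
      using b a s V_pos_outside[OF z False] by (intro shifted_root_power_below_tangent) auto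
    then show ?thesis
      using False a s V_nonneg[of z]
      by (simp add: shifted_V_def a_def ennreal_leI flip: ennreal_plus ennreal_mult)
  qed simp
qed simp

lemma drift_step:
  assumes y: "y \<in> S" "y \<notin> G"
  shows "P (\<lambda>z. indicator (- G) z * shifted_V (Suc j) z) y + ennreal (drift_gain j) \<le> shifted_V j y"
proof -
  define s where "s = V y powr (1/b)"
  define a where "a = shift_step * Suc j"
  have v: "0 < V y" using V_pos_outside[OF y] .
  have s: "0 < s" using v by (simp add: s_def)
  have a: "0 < a" using shift_step_pos by (simp add: a_def)
  have Vs: "V y = s powr b" "V y powr (1 - 1/b) = s powr (b - 1)"
    using v b by (simp_all add: s_def powr_powr field_simps)
  obtain p where p: "P (\<lambda>z. ennreal (V z)) y = ennreal p" "0 \<le> p"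
    using drift[OF y] by (cases "P (\<lambda>z. ennreal (V z)) y" rule: ennreal_cases) (auto simp: top_unique)
  have "ennreal (p + c0 * V y powr (1 - 1/b)) \<le> ennreal (V y)"
    using drift[OF y] p c0 by (simp add: ennreal_plus)
  then have "p + 2 * b * shift_step * s powr (b - 1) \<le> s powr b"
    using v b Vs by (simp add: ennreal_le_iff shift_step_def)
  then have real_step: "a * (s + a) powr (b - 1) + ((s + a) / s) powr (b - 1) * p + drift_gain j
      \<le> (s + shift_step * j) powr b"
    using drift_step_real[OF b shift_step_pos _ s p(2), of "shift_step * j"] shift_step_pos
    by (simp add: a_def drift_gain_def algebra_simps)
  have "P (\<lambda>z. indicator (- G) z * shifted_V (Suc j) z) y + ennreal (drift_gain j)
      \<le> ennreal (a * (s + a) powr (b - 1)) + ennreal (((s + a) / s) powr (b - 1)) * ennreal p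
        + ennreal (drift_gain j)"
    using P_outside_shifted_V_le[OF y(1) s, of j] p by (simp add: a_def)
  also have "\<dots> = ennreal (a * (s + a) powr (b - 1) + ((s + a) / s) powr (b - 1) * p + drift_gain j)"
    using a s p(2) drift_gain_pos[of j] by (simp flip: ennreal_plus ennreal_mult)
  also have "\<dots> \<le> shifted_V j y"
    using real_step by (simp add: shifted_V_def s_def ennreal_leI)
  finally show ?thesis .
qed

lemma weighted_surv_le_shifted_V:
  "y \<in> S \<Longrightarrow> y \<notin> G \<Longrightarrow> (\<Sum>i<n. ennreal (drift_gain (m + i)) * surv P G i y) \<le> shifted_V m y"
proof (induction n arbitrary: m y)
  case 0
  then show ?case by simp
next
  case (Suc n)
  have "(\<Sum>i<Suc n. ennreal (drift_gain (m + i)) * surv P G i y)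
      = ennreal (drift_gain m)
        + P (\<lambda>z. indicator (- G) z * (\<Sum>i<n. ennreal (drift_gain (Suc m + i)) * surv P G i z)) y"
    by (rule weighted_surv_sum_Suc)
  also have "\<dots> \<le> ennreal (drift_gain m) + P (\<lambda>z. indicator (- G) z * shifted_V (Suc m) z) y"
  proof (intro add_left_mono monotone)
    fix z assume "z \<in> S"
    then show "indicator (- G) z * (\<Sum>i<n. ennreal (drift_gain (Suc m + i)) * surv P G i z)
        \<le> indicator (- G) z * shifted_V (Suc m) z"
      using Suc.IH[of z "Suc m"] by (auto simp: indicator_def)
  qed (use Suc.prems in simp)
  also have "\<dots> \<le> shifted_V m y"
    using drift_step[OF Suc.prems, of m] by (simp add: add.commute)
  finally show ?case .
qed

lemma weighted_surv_sum_le: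
  assumes x: "x \<in> S"
  shows "(\<Sum>i<n. ennreal (drift_gain i) * surv P G i x)
           \<le> ennreal (drift_gain 0) + P (\<lambda>z. indicator (- G) z * shifted_V 1 z) x"
proof (cases n)
  case 0
  then show ?thesis by simp
next
  case (Suc n')
  have "(\<Sum>i<n. ennreal (drift_gain i) * surv P G i x)
      = ennreal (drift_gain 0)
        + P (\<lambda>z. indicator (- G) z * (\<Sum>i<n'. ennreal (drift_gain (Suc i)) * surv P G i z)) x"
    using weighted_surv_sum_Suc[where r = drift_gain and m = 0 and n = n' and x = x]
    by (simp add: Suc)
  also have "\<dots> \<le> ennreal (drift_gain 0) + P (\<lambda>z. indicator (- G) z * shifted_V 1 z) x"
    using weighted_surv_le_shifted_V[where n = n' and m = 1]
    by (intro add_left_mono monotone[OF _ x]) (auto simp: indicator_def)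
  finally show ?thesis .
qed

lemma weighted_surv_sum_bounded:
  obtains C where "0 \<le> C"
    "\<And>x n. x \<in> S \<Longrightarrow> (\<Sum>i<n. ennreal (drift_gain i) * surv P G i x) \<le> ennreal (C * max (V x) 1)"
proof -
  define A where "A = shift_step * (1 + shift_step) powr (b - 1)"
  define B where "B = (1 + shift_step) powr (b - 1)"
  define C where "C = drift_gain 0 + A + B * Ch"
  have AB: "0 \<le> A" "0 \<le> B" using shift_step_pos by (simp_all add: A_def B_def)
  have C: "0 \<le> C" using AB Ch drift_gain_pos[of 0] by (simp add: C_def)
  have "ennreal (drift_gain 0) + P (\<lambda>z. indicator (- G) z * shifted_V 1 z) x \<le> ennreal (C * max (V x) 1)"
    if x: "x \<in> S" for x
  proof -
    have "ennreal (drift_gain 0) + P (\<lambda>z. indicator (- G) z * shifted_V 1 z) x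
        \<le> ennreal (drift_gain 0) + (ennreal A + ennreal B * P (\<lambda>y. ennreal (V y)) x)"
      using P_outside_shifted_V_le[OF x, of 1 0] by (simp add: A_def B_def)
    also have "\<dots> \<le> ennreal (drift_gain 0) + (ennreal A + ennreal B * ennreal (Ch * V x))"
      using V_growth[OF x] by (intro add_left_mono mult_left_mono) auto
    also have "\<dots> = ennreal (drift_gain 0 + A + B * Ch * V x)"
      using AB Ch V_nonneg[of x] drift_gain_pos[of 0]
      by (simp add: mult.assoc flip: ennreal_plus ennreal_mult)
    also have "drift_gain 0 + A + B * Ch * V x \<le> C * max (V x) 1"
    proof -
      have "drift_gain 0 + A \<le> (drift_gain 0 + A) * max (V x) 1"
        using AB drift_gain_pos[of 0] by (simp add: mult_le_cancel_left1)
      moreover have "B * Ch * V x \<le> B * Ch * max (V x) 1"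
        using AB Ch by (intro mult_left_mono) auto
      ultimately show ?thesis by (simp add: C_def algebra_simps)
    qed
    finally show ?thesis by (simp add: ennreal_leI)
  qed
  with C that weighted_surv_sum_le show ?thesis by (meson order_trans)
qed

lemma INF_surv_eq_0:
  assumes x: "x \<in> S"
  shows "(INF k. surv P G k x) = 0"
proof (rule ccontr)
  obtain C where C: "0 \<le> C"
    "\<And>n. (\<Sum>i<n. ennreal (drift_gain i) * surv P G i x) \<le> ennreal (C * max (V x) 1)"
    using weighted_surv_sum_bounded x by metis
  let ?m = "INF k. surv P G k x"
  assume "?m \<noteq> 0"
  moreover have "?m \<le> 1" by (rule INF_lower2[of 0]) auto
  ultimately obtain m where m: "?m = ennreal m" "0 < m"
    by (cases ?m rule: ennreal_cases) (auto simp: top_unique)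
  have bounded: "real n * (drift_gain 0 * m) \<le> C * max (V x) 1" for n
  proof -
    have "ennreal (real n * (drift_gain 0 * m)) = (\<Sum>i<n. ennreal (drift_gain 0) * ?m)"
      using m drift_gain_pos[of 0] by (simp add: ennreal_mult ennreal_of_nat_eq_real_of_nat)
    also have "\<dots> \<le> (\<Sum>i<n. ennreal (drift_gain i) * surv P G i x)"
      by (intro sum_mono mult_mono ennreal_leI drift_gain_mono INF_lower) auto
    also have "\<dots> \<le> ennreal (C * max (V x) 1)" by (rule C(2))
    finally show ?thesis using C(1) by (simp add: ennreal_le_iff)
  qed
  obtain n where "C * max (V x) 1 < real n * (drift_gain 0 * m)"
    using ex_less_of_nat_mult[of "drift_gain 0 * m"] drift_gain_pos[of 0] m by auto
  with bounded[of n] show False by simp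
qed

lemma powr_Suc_diff_le_drift_gain:
  "real (Suc j) powr b - real j powr b \<le> drift_gain j / shift_step powr b"
proof -
  have "(shift_step * Suc j) powr (b - 1) = shift_step powr (b - 1) * real (Suc j) powr (b - 1)"
    by (rule powr_mult)
  moreover have "shift_step powr b = shift_step * shift_step powr (b - 1)"
    using shift_step_pos powr_add[of shift_step 1 "b - 1"] by simp
  ultimately have "drift_gain j / shift_step powr b = b * real (Suc j) powr (b - 1)"
    using shift_step_pos by (simp add: drift_gain_def)
  then show ?thesis using powr_Suc_diff_le[OF b] by simp
qed

lemma hitting_moment_partial_sum_le:
  assumes x: "x \<in> S"
  shows "(\<Sum>k<n. ennreal (real (Suc k) powr b) * hitp P G k x)
           \<le> ennreal (1 / shift_step powr b) * (\<Sum>k<n. ennreal (drift_gain k) * surv P G k x)"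
proof -
  have "(\<Sum>k<n. ennreal (real (Suc k) powr b) * hitp P G k x)
      \<le> (\<Sum>k<n. ennreal (real (Suc k) powr b) * hitp P G k x) + ennreal (real n powr b) * surv P G n x"
    by simp
  also have "\<dots> \<le> (\<Sum>k<n. ennreal (real (Suc k) powr b - real k powr b) * surv P G k x)"
    using b by (intro ennreal_abel_summation_le hitp_plus_surv_Suc_le[OF x])
      (auto simp: mono_def powr_mono2)
  also have "\<dots> \<le> (\<Sum>k<n. ennreal (1 / shift_step powr b) * (ennreal (drift_gain k) * surv P G k x))"
  proof (rule sum_mono)
    fix k
    have "ennreal (real (Suc k) powr b - real k powr b) \<le> ennreal (1 / shift_step powr b) * ennreal (drift_gain k)"
      using ennreal_leI[OF powr_Suc_diff_le_drift_gain[of k]] less_imp_le[OF drift_gain_pos[of k]]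
      by (subst ennreal_mult[symmetric]) auto
    then show "ennreal (real (Suc k) powr b - real k powr b) * surv P G k x
        \<le> ennreal (1 / shift_step powr b) * (ennreal (drift_gain k) * surv P G k x)"
      by (simp add: mult_right_mono flip: mult.assoc)
  qed
  finally show ?thesis by (simp add: sum_distrib_left)
qed

theorem return_moment_le:
  obtains C where "0 \<le> C" "\<And>x. x \<in> S \<Longrightarrow> return_moment P G b x \<le> ennreal (C * max (V x) 1)"
proof -
  obtain C where C: "0 \<le> C"
    "\<And>x n. x \<in> S \<Longrightarrow> (\<Sum>i<n. ennreal (drift_gain i) * surv P G i x) \<le> ennreal (C * max (V x) 1)"
    using weighted_surv_sum_bounded by metis
  define D where "D = 1 / shift_step powr b"
  have D: "0 \<le> D" by (simp add: D_def)
  have "return_moment P G b x \<le> ennreal (D * C * max (V x) 1)" if x: "x \<in> S" for x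
  proof -
    have "ennreal D * ennreal (C * max (V x) 1) = ennreal (D * C * max (V x) 1)"
      using D C(1) by (simp add: mult.assoc flip: ennreal_mult)
    then have "(\<Sum>k<n. ennreal (real (Suc k) powr b) * hitp P G k x) \<le> ennreal (D * C * max (V x) 1)" for n
      using order_trans[OF hitting_moment_partial_sum_le[OF x, folded D_def]
          mult_left_mono[OF C(2)[OF x]]]
      by simp
    then show ?thesis
      unfolding return_moment_def INF_surv_eq_0[OF x] by (simp add: suminf_le_const)
  qed
  with C(1) D that show ?thesis by (meson mult_nonneg_nonneg)
qed

end

section \<open>The stochastic energy exchange model\<close>

abbreviation state_borel :: "state measure" where
  "state_borel \<equiv> PiM UNIV (\<lambda>_. borel)"

lemma space_state_borel[simp]: "space state_borel = UNIV"
  by (simp add: space_PiM PiE_UNIV_domain)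

lemma state_component_measurable[measurable (raw)]:
  "F \<in> measurable M state_borel \<Longrightarrow> (\<lambda>w. F w i) \<in> borel_measurable M"
  by (rule measurable_compose[OF _ measurable_component_singleton]) auto

lemma state_update_measurable[measurable (raw)]:
  assumes [measurable]: "F \<in> measurable M state_borel" "G \<in> borel_measurable M"
  shows "(\<lambda>w. (F w)(i := G w)) \<in> measurable M state_borel"
proof -
  have "(\<lambda>w. (F w)(i := G w)) = (\<lambda>w j. if j = i then G w else F w j)"
    by (auto simp: fun_eq_iff)
  also have "\<dots> \<in> measurable M state_borel"
    by (rule measurable_PiM_single') auto
  finally show ?thesis .
qed

lemma unif_int_add:
  assumes [measurable]: "f \<in> borel_measurable borel" "g \<in> borel_measurable borel"
  shows "unif_int (\<lambda>p. f p + g p) = unif_int f + unif_int g"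
  unfolding unif_int_def by (simp add: distrib_left nn_integral_add)

lemma unif_int_cmult:
  assumes [measurable]: "f \<in> borel_measurable borel"
  shows "unif_int (\<lambda>p. c * f p) = c * unif_int f"
  unfolding unif_int_def by (simp add: mult.left_commute nn_integral_cmult)

lemma unif_int_mono:
  "(\<And>p. 0 < p \<Longrightarrow> p < 1 \<Longrightarrow> f p \<le> g p) \<Longrightarrow> unif_int f \<le> unif_int g"
  unfolding unif_int_def by (intro nn_integral_mono) (auto simp: indicator_def)

lemma unif_int_const: "unif_int (\<lambda>_. c) = c"
  unfolding unif_int_def by (simp add: nn_integral_cmult_indicator mult.commute)

lemma unif_int_powr:
  fixes e :: real
  assumes e: "-1 < e"
  shows "unif_int (\<lambda>p. ennreal (p powr e)) = ennreal (1 / (e + 1))"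
proof -
  have I: "((\<lambda>x. x powr e) has_integral (1 / (e + 1))) {0..1}"
    using has_integral_powr_from_0[OF e, of 1] by simp
  have "(\<integral>\<^sup>+ x. ennreal (x powr e) * indicator {0..1} x \<partial>lborel) = ennreal (1 / (e + 1))"
    by (rule nn_integral_has_integral_lebesgue'[OF _ I]) auto
  moreover have "(\<integral>\<^sup>+ x. ennreal (x powr e) * indicator {0..1} x \<partial>lborel)
      = (\<integral>\<^sup>+ p. indicator {0<..<1} p * ennreal (p powr e) \<partial>lborel)"
    by (intro nn_integral_cong_AE
        eventually_mono[OF AE_conjI[OF AE_lborel_singleton[of 0] AE_lborel_singleton[of 1]]])
       (auto simp: indicator_def)
  ultimately show ?thesis by (simp add: unif_int_def)
qed

lemma unif_int_reflect:
  assumes [measurable]: "f \<in> borel_measurable borel"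
  shows "unif_int (\<lambda>p. f (1 - p)) = unif_int f"
proof -
  have "unif_int (\<lambda>p. f (1 - p))
      = ennreal \<bar>-1\<bar> * (\<integral>\<^sup>+ p. indicator {0<..<1} (1 + -1 * p) * f (1 - (1 + -1 * p)) \<partial>lborel)"
    unfolding unif_int_def by (rule nn_integral_real_affine) auto
  also have "(\<lambda>p. indicator {0<..<1} (1 + -1 * p) * f (1 - (1 + -1 * p)) :: ennreal)
      = (\<lambda>p. indicator {0<..<1} p * f p)"
    by (auto simp: fun_eq_iff indicator_def)
  finally show ?thesis by (simp add: unif_int_def)
qed

lemma exp_int_add:
  assumes [measurable]: "f \<in> borel_measurable borel" "g \<in> borel_measurable borel"
  shows "exp_int T (\<lambda>X. f X + g X) = exp_int T f + exp_int T g"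
  unfolding exp_int_def by (simp add: distrib_left nn_integral_add)

lemma exp_int_cmult:
  assumes [measurable]: "f \<in> borel_measurable borel"
  shows "exp_int T (\<lambda>X. c * f X) = c * exp_int T f"
  unfolding exp_int_def by (simp add: mult.left_commute nn_integral_cmult)

lemma exp_int_mono:
  "(\<And>X. 0 < X \<Longrightarrow> f X \<le> g X) \<Longrightarrow> exp_int T f \<le> exp_int T g"
  unfolding exp_int_def by (intro nn_integral_mono) (auto simp: indicator_def intro: mult_left_mono)

lemma exp_int_const:
  assumes T: "0 < T"
  shows "exp_int T (\<lambda>_. c) = c"
proof -
  have "((\<lambda>x. exp (- (1/T) * x)) has_integral exp (- (1/T) * 0) / (1/T)) {0..}"
    using T by (intro has_integral_exp_minus_to_infinity) auto
  then have "((\<lambda>x. exp (- (1/T) * x)) has_integral T) {0..}" by simp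
  then have "((\<lambda>x. (1/T) * exp (- (1/T) * x)) has_integral (1/T) * T) {0..}"
    by (rule has_integral_mult_right)
  then have I: "((\<lambda>x. exp (- x / T) / T) has_integral 1) {0..}"
    using T by simp
  have "(\<integral>\<^sup>+ x. ennreal (exp (- x / T) / T) * indicator {0..} x \<partial>lborel) = ennreal 1"
    by (rule nn_integral_has_integral_lebesgue'[OF _ I]) (use T in auto)
  moreover have "(\<integral>\<^sup>+ x. ennreal (exp (- x / T) / T) * indicator {0..} x \<partial>lborel)
      = (\<integral>\<^sup>+ X. indicator {0<..} X * ennreal (exp (- X / T) / T) \<partial>lborel)"
    by (intro nn_integral_cong_AE eventually_mono[OF AE_lborel_singleton[of 0]])
       (auto simp: indicator_def)
  ultimately have "exp_int T (\<lambda>_. 1) = 1" by (simp add: exp_int_def)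
  then show ?thesis using exp_int_cmult[of "\<lambda>_. 1" T c] by simp
qed

definition reservoir_jump :: "nat \<Rightarrow> real \<Rightarrow> (state \<Rightarrow> ennreal) \<Rightarrow> state \<Rightarrow> ennreal" where
  "reservoir_jump j T f x = unif_int (\<lambda>p. exp_int T (\<lambda>X. f (x(j := p * (x j + X)))))"

lemma left_jump_eq_reservoir_jump: "left_jump T = reservoir_jump 0 T"
  by (simp add: fun_eq_iff left_jump_def reservoir_jump_def)

lemma right_jump_eq_reservoir_jump: "right_jump N T = reservoir_jump (N - 1) T"
  by (simp add: fun_eq_iff right_jump_def reservoir_jump_def)

lemma pos_state_bond_update:
  assumes "pos_state N x" "Suc i < N" "0 < p" "p < 1"
  shows "pos_state N (x(i := p * (x i + x (Suc i)), Suc i := (1 - p) * (x i + x (Suc i))))"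
  using assms by (auto simp: pos_state_def intro!: mult_pos_pos add_pos_pos)

lemma pos_state_reservoir_update:
  assumes "pos_state N x" "j < N" "0 < p" "0 < X"
  shows "pos_state N (x(j := p * (x j + X)))"
  using assms by (auto simp: pos_state_def)

lemma bond_jump_measurable[measurable]:
  assumes [measurable]: "f \<in> borel_measurable state_borel"
  shows "bond_jump i f \<in> borel_measurable state_borel"
  unfolding bond_jump_def[abs_def] unif_int_def by measurable

lemma bond_jump_add:
  assumes [measurable]: "f \<in> borel_measurable state_borel" "g \<in> borel_measurable state_borel"
  shows "bond_jump i (\<lambda>y. f y + g y) x = bond_jump i f x + bond_jump i g x"
  unfolding bond_jump_def by (rule unif_int_add) measurable

lemma bond_jump_cmult:
  assumes [measurable]: "f \<in> borel_measurable state_borel"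
  shows "bond_jump i (\<lambda>y. c * f y) x = c * bond_jump i f x"
  unfolding bond_jump_def by (rule unif_int_cmult) measurable

lemma bond_jump_mono:
  assumes "\<And>y. pos_state N y \<Longrightarrow> f y \<le> g y" "pos_state N x" "Suc i < N"
  shows "bond_jump i f x \<le> bond_jump i g x"
  unfolding bond_jump_def using assms by (intro unif_int_mono assms(1) pos_state_bond_update) auto

lemma bond_jump_const: "bond_jump i (\<lambda>_. c) x = c"
  by (simp add: bond_jump_def unif_int_const)

lemma reservoir_jump_measurable[measurable]:
  assumes [measurable]: "f \<in> borel_measurable state_borel"
  shows "reservoir_jump j T f \<in> borel_measurable state_borel"
  unfolding reservoir_jump_def[abs_def] unif_int_def exp_int_def by measurable

lemma reservoir_jump_add:
  assumes [measurable]: "f \<in> borel_measurable state_borel" "g \<in> borel_measurable state_borel"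
  shows "reservoir_jump j T (\<lambda>y. f y + g y) x = reservoir_jump j T f x + reservoir_jump j T g x"
proof -
  have "exp_int T (\<lambda>X. f (x(j := p * (x j + X))) + g (x(j := p * (x j + X))))
      = exp_int T (\<lambda>X. f (x(j := p * (x j + X)))) + exp_int T (\<lambda>X. g (x(j := p * (x j + X))))" for p
    by (rule exp_int_add) measurable
  then show ?thesis
    unfolding reservoir_jump_def by (simp, intro unif_int_add) (unfold exp_int_def, measurable)
qed

lemma reservoir_jump_cmult:
  assumes [measurable]: "f \<in> borel_measurable state_borel"
  shows "reservoir_jump j T (\<lambda>y. c * f y) x = c * reservoir_jump j T f x"
proof -
  have "exp_int T (\<lambda>X. c * f (x(j := p * (x j + X)))) = c * exp_int T (\<lambda>X. f (x(j := p * (x j + X))))" for p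
    by (rule exp_int_cmult) measurable
  then show ?thesis
    unfolding reservoir_jump_def by (simp, intro unif_int_cmult) (unfold exp_int_def, measurable)
qed

lemma reservoir_jump_mono:
  assumes "\<And>y. pos_state N y \<Longrightarrow> f y \<le> g y" "pos_state N x" "j < N"
  shows "reservoir_jump j T f x \<le> reservoir_jump j T g x"
  unfolding reservoir_jump_def using assms
  by (intro unif_int_mono exp_int_mono assms(1) pos_state_reservoir_update) auto

lemma reservoir_jump_const: "0 < T \<Longrightarrow> reservoir_jump j T (\<lambda>_. c) x = c"
  by (simp add: reservoir_jump_def exp_int_const unif_int_const)

lemma rate_nonneg: "0 \<le> K \<Longrightarrow> 0 \<le> a \<Longrightarrow> 0 \<le> a' \<Longrightarrow> 0 \<le> rate K a a'"
  by (simp add: rate_def)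

lemma rate_le: "rate K a a' \<le> K"
  by (simp add: rate_def)

lemma a_coef_bounds:
  assumes m: "1 \<le> m" "m \<le> N"
  shows "1/2 \<le> a_coef N m" "a_coef N m \<le> 1"
proof -
  have d: "(1::real) \<le> 2 ^ N - 1"
    using m one_le_power[of "2::real" "N - 1"] power_Suc[of "2::real" "N - 1"] by simp
  have "(2::real) ^ (m - 1) \<le> 2 ^ (N - 1)" using m by (intro power_increasing) auto
  moreover have "(2::real) ^ N = 2 * 2 ^ (N - 1)"
    using m power_Suc[of "2::real" "N - 1"] by simp
  moreover have "2 * ((2::real) ^ (m - 1) - 1) = 2 * 2 ^ (m - 1) - 2" by simp
  ultimately have "2 * ((2::real) ^ (m - 1) - 1) \<le> 2 ^ N - 1" by linarith
  then have "(2 ^ (m - 1) - 1) / (2 ^ N - 1) \<le> (1::real) / 2"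
    using d by (simp add: divide_simps)
  then show "1/2 \<le> a_coef N m" by (simp add: a_coef_def)
  show "a_coef N m \<le> 1" using d by (simp add: a_coef_def)
qed

lemma Vfun_measurable[measurable]: "Vfun N \<eta> \<in> borel_measurable state_borel"
  unfolding Vfun_def[abs_def] by measurable

lemma Vfun_nonneg: "0 \<le> Vfun N \<eta> x"
  unfolding Vfun_def by (intro sum_nonneg) auto

lemma Vfun_scaled_le:
  assumes \<eta>: "0 < \<eta>" "\<eta> \<le> 1" and x: "pos_state N x" and q: "0 < q" "q \<le> 1"
    and x': "\<And>j. j < N \<Longrightarrow> q * x j \<le> x' j"
  shows "Vfun N \<eta> x' \<le> q powr (\<eta> / 2 - 1) * Vfun N \<eta> x"
  unfolding Vfun_def sum_distrib_left
proof (intro sum_mono)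
  fix m k assume m: "m \<in> {1..N}" and k: "k \<in> {..<N - m + 1}"
  define e where "e = a_coef N m * \<eta> - 1"
  have "a_coef N m * \<eta> \<le> 1"
    using a_coef_bounds[of m N] m \<eta> by (intro mult_le_one) auto
  then have e: "\<eta> / 2 - 1 \<le> e" "e \<le> 0"
    using a_coef_bounds[of m N] m \<eta> by (auto simp: e_def)
  have idx: "k + j < N" if "j < m" for j using m k that by auto
  have S: "0 < (\<Sum>j<m. x (k + j))"
    using m idx x by (intro sum_pos) (auto simp: pos_state_def lessThan_empty_iff)
  have S': "q * (\<Sum>j<m. x (k + j)) \<le> (\<Sum>j<m. x' (k + j))"
    unfolding sum_distrib_left using idx x' by (intro sum_mono) auto
  have "(\<Sum>j<m. x' (k + j)) powr e \<le> (q * (\<Sum>j<m. x (k + j))) powr e"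
    using S S' q e by (intro powr_mono2') auto
  also have "\<dots> = q powr e * (\<Sum>j<m. x (k + j)) powr e" by (rule powr_mult)
  also have "\<dots> \<le> q powr (\<eta> / 2 - 1) * (\<Sum>j<m. x (k + j)) powr e"
    using q e by (intro mult_right_mono powr_mono') auto
  finally show "(\<Sum>j<m. x' (k + j)) powr (a_coef N m * \<eta> - 1)
      \<le> q powr (\<eta> / 2 - 1) * (\<Sum>j<m. x (k + j)) powr (a_coef N m * \<eta> - 1)"
    by (simp add: e_def)
qed

lemma Vfun_bond_update_le:
  assumes \<eta>: "0 < \<eta>" "\<eta> \<le> 1" and x: "pos_state N x" and i: "Suc i < N" and p: "0 < p" "p < 1"
  shows "Vfun N \<eta> (x(i := p * (x i + x (Suc i)), Suc i := (1 - p) * (x i + x (Suc i))))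
           \<le> (p powr (\<eta> / 2 - 1) + (1 - p) powr (\<eta> / 2 - 1)) * Vfun N \<eta> x"
proof -
  define q where "q = min p (1 - p)"
  have q: "0 < q" "q \<le> 1" using p by (auto simp: q_def)
  have "Vfun N \<eta> (x(i := p * (x i + x (Suc i)), Suc i := (1 - p) * (x i + x (Suc i))))
      \<le> q powr (\<eta> / 2 - 1) * Vfun N \<eta> x"
  proof (rule Vfun_scaled_le[OF \<eta> x q])
    fix j assume j: "j < N"
    have "0 < x i" "0 < x (Suc i)" "0 < x j" using x i j by (auto simp: pos_state_def)
    then show "q * x j \<le> (x(i := p * (x i + x (Suc i)), Suc i := (1 - p) * (x i + x (Suc i)))) j"
      using p q by (auto simp: q_def intro: mult_mono mult_left_le_one_le)
  qed
  also have "q powr (\<eta> / 2 - 1) \<le> p powr (\<eta> / 2 - 1) + (1 - p) powr (\<eta> / 2 - 1)"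
    using p by (auto simp: q_def min_def)
  then have "q powr (\<eta> / 2 - 1) * Vfun N \<eta> x
      \<le> (p powr (\<eta> / 2 - 1) + (1 - p) powr (\<eta> / 2 - 1)) * Vfun N \<eta> x"
    by (rule mult_right_mono) (rule Vfun_nonneg)
  finally show ?thesis .
qed

lemma Vfun_reservoir_update_le:
  assumes \<eta>: "0 < \<eta>" "\<eta> \<le> 1" and x: "pos_state N x" and j: "j < N" and p: "0 < p" "p \<le> 1"
    and X: "0 < X"
  shows "Vfun N \<eta> (x(j := p * (x j + X))) \<le> p powr (\<eta> / 2 - 1) * Vfun N \<eta> x"
proof (rule Vfun_scaled_le[OF \<eta> x p])
  fix l assume l: "l < N"
  have "0 < x l" "0 < x j" using x l j by (auto simp: pos_state_def)
  then show "p * x l \<le> (x(j := p * (x j + X))) l"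
    using p X by (auto intro: mult_left_le_one_le)
qed

lemma unif_int_powr_half_eta: "0 < \<eta> \<Longrightarrow> unif_int (\<lambda>p. ennreal (p powr (\<eta> / 2 - 1))) = ennreal (2 / \<eta>)"
  using unif_int_powr[of "\<eta> / 2 - 1"] by simp

lemma bond_jump_Vfun_le:
  assumes \<eta>: "0 < \<eta>" "\<eta> \<le> 1" and x: "pos_state N x" and i: "Suc i < N"
  shows "bond_jump i (\<lambda>y. ennreal (Vfun N \<eta> y)) x \<le> ennreal (4 / \<eta> * Vfun N \<eta> x)"
proof -
  define e where "e = \<eta> / 2 - 1"
  define v where "v = Vfun N \<eta> x"
  have v: "0 \<le> v" by (simp add: v_def Vfun_nonneg)
  have "bond_jump i (\<lambda>y. ennreal (Vfun N \<eta> y)) x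
      \<le> unif_int (\<lambda>p. ennreal v * ennreal (p powr e) + ennreal v * ennreal ((1 - p) powr e))"
    unfolding bond_jump_def
  proof (rule unif_int_mono)
    fix p :: real assume "0 < p" "p < 1"
    with Vfun_bond_update_le[OF \<eta> x i this] v
    show "ennreal (Vfun N \<eta> (x(i := p * (x i + x (Suc i)), Suc i := (1 - p) * (x i + x (Suc i)))))
        \<le> ennreal v * ennreal (p powr e) + ennreal v * ennreal ((1 - p) powr e)"
      by (simp add: e_def v_def ennreal_leI algebra_simps flip: ennreal_mult ennreal_plus)
  qed
  also have "\<dots> = ennreal v * ennreal (2 / \<eta>) + ennreal v * ennreal (2 / \<eta>)"
  proof -
    have "unif_int (\<lambda>p. ennreal ((1 - p) powr e)) = unif_int (\<lambda>p. ennreal (p powr e))"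
      by (rule unif_int_reflect[of "\<lambda>p. ennreal (p powr e)"]) measurable
    then show ?thesis
      using unif_int_powr_half_eta[OF \<eta>(1)] by (simp add: e_def unif_int_add unif_int_cmult)
  qed
  also have "\<dots> = ennreal (4 / \<eta> * v)"
    using v \<eta> by (simp flip: ennreal_mult ennreal_plus)
  finally show ?thesis by (simp add: v_def)
qed

lemma reservoir_jump_Vfun_le:
  assumes \<eta>: "0 < \<eta>" "\<eta> \<le> 1" and x: "pos_state N x" and j: "j < N" and T: "0 < T"
  shows "reservoir_jump j T (\<lambda>y. ennreal (Vfun N \<eta> y)) x \<le> ennreal (2 / \<eta> * Vfun N \<eta> x)"
proof -
  define v where "v = Vfun N \<eta> x"
  have v: "0 \<le> v" by (simp add: v_def Vfun_nonneg)
  have "reservoir_jump j T (\<lambda>y. ennreal (Vfun N \<eta> y)) x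
      \<le> unif_int (\<lambda>p. exp_int T (\<lambda>_. ennreal v * ennreal (p powr (\<eta> / 2 - 1))))"
    unfolding reservoir_jump_def using Vfun_reservoir_update_le[OF \<eta> x j] v
    by (intro unif_int_mono exp_int_mono)
      (simp add: v_def ennreal_leI mult.commute flip: ennreal_mult)
  also have "\<dots> = ennreal v * ennreal (2 / \<eta>)"
    using unif_int_powr_half_eta[OF \<eta>(1)] T by (simp add: exp_int_const unif_int_cmult)
  also have "\<dots> = ennreal (2 / \<eta> * v)"
    using v \<eta> by (simp add: mult.commute flip: ennreal_mult)
  finally show ?thesis by (simp add: v_def)
qed

lemma poisson_weights_sums:
  fixes a c :: real
  shows "(\<lambda>k. exp (- a) * a ^ k / fact k * c ^ k) sums (exp (- a) * exp (c * a))"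
proof -
  have "(\<lambda>k. exp (- a) * ((c * a) ^ k /\<^sub>R fact k)) sums (exp (- a) * exp (c * a))"
    by (rule sums_mult[OF exp_converges])
  then show ?thesis by (simp add: divide_inverse power_mult_distrib mult_ac)
qed

lemma Pt_eq_mixture:
  "Pt N TL TR K h = (\<lambda>f x. \<Sum>k. ennreal (exp (- (unif_const N K * h)) * (unif_const N K * h) ^ k / fact k)
     * (Jop N TL TR K ^^ k) f x)"
  by (simp add: fun_eq_iff Pt_def)

locale energy_exchange =
  fixes N :: nat and TL TR K :: real
  assumes N: "1 \<le> N" and TL: "0 < TL" and TR: "0 < TR" and K: "0 < K"
begin

lemma total_rate_le: "total_rate N TL TR K x \<le> unif_const N K"
proof -
  have "total_rate N TL TR K x \<le> (\<Sum>i<N - 1. K) + K + K"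
    unfolding total_rate_def by (intro add_mono sum_mono rate_le)
  also have "\<dots> = unif_const N K"
    using N by (simp add: unif_const_def of_nat_diff algebra_simps)
  finally show ?thesis .
qed

lemma Jop_weights_sum:
  assumes x: "pos_state N x"
  defines "L \<equiv> unif_const N K"
  shows "(\<Sum>i<N - 1. ennreal (rate K (x i) (x (Suc i)) / L)) + ennreal (rate K TL (x 0) / L)
           + ennreal (rate K (x (N - 1)) TR / L) + ennreal (1 - total_rate N TL TR K x / L) = 1"
proof -
  have L: "0 < L" using N K by (simp add: L_def unif_const_def)
  have xi: "0 \<le> x i" if "i < N" for i
    using x that by (simp add: pos_state_def less_imp_le)
  have bonds: "0 \<le> rate K (x i) (x (Suc i)) / L" if "i < N - 1" for i
    using xi that K L by (auto intro!: divide_nonneg_pos rate_nonneg)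
  have sides: "0 \<le> rate K TL (x 0) / L" "0 \<le> rate K (x (N - 1)) TR / L"
    using xi N TL TR K L by (auto intro!: divide_nonneg_pos rate_nonneg)
  have rest: "0 \<le> 1 - total_rate N TL TR K x / L"
    using total_rate_le[of x] L by (simp add: L_def)
  have bond_sum: "0 \<le> (\<Sum>i<N - 1. rate K (x i) (x (Suc i)) / L)"
    using bonds by (intro sum_nonneg) auto
  have "(\<Sum>i<N - 1. ennreal (rate K (x i) (x (Suc i)) / L))
      = ennreal (\<Sum>i<N - 1. rate K (x i) (x (Suc i)) / L)"
    using bonds by (intro sum_ennreal) auto
  then have "(\<Sum>i<N - 1. ennreal (rate K (x i) (x (Suc i)) / L)) + ennreal (rate K TL (x 0) / L)
      + ennreal (rate K (x (N - 1)) TR / L) + ennreal (1 - total_rate N TL TR K x / L)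
      = ennreal ((\<Sum>i<N - 1. rate K (x i) (x (Suc i)) / L) + rate K TL (x 0) / L
      + rate K (x (N - 1)) TR / L + (1 - total_rate N TL TR K x / L))"
    using sides rest bond_sum by (simp add: ennreal_plus)
  also have "(\<Sum>i<N - 1. rate K (x i) (x (Suc i)) / L) + rate K TL (x 0) / L
      + rate K (x (N - 1)) TR / L + (1 - total_rate N TL TR K x / L) = 1"
    using L by (simp add: total_rate_def add_divide_distrib diff_divide_distrib sum_divide_distrib)
  finally show ?thesis by simp
qed

lemma Jop_le_const:
  assumes x: "pos_state N x"
    and bond: "\<And>i. Suc i < N \<Longrightarrow> bond_jump i f x \<le> c"
    and left: "reservoir_jump 0 TL f x \<le> c" and right: "reservoir_jump (N - 1) TR f x \<le> c"
    and stay: "f x \<le> c"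
  shows "Jop N TL TR K f x \<le> c"
proof -
  define L where "L = unif_const N K"
  have "Jop N TL TR K f x
      \<le> (\<Sum>i<N - 1. ennreal (rate K (x i) (x (Suc i)) / L) * c) + ennreal (rate K TL (x 0) / L) * c
        + ennreal (rate K (x (N - 1)) TR / L) * c + ennreal (1 - total_rate N TL TR K x / L) * c"
    unfolding Jop_def Let_def left_jump_eq_reservoir_jump right_jump_eq_reservoir_jump L_def
    using assms by (intro add_mono sum_mono mult_left_mono) auto
  also have "\<dots> = c"
    by (simp only: sum_distrib_right[symmetric] distrib_right[symmetric] Jop_weights_sum[OF x, folded L_def])
      simp
  finally show ?thesis .
qed

lemma Jop_sub_markov: "sub_markov_operator (Jop N TL TR K) state_borel {x. pos_state N x}"
proof unfold_locales
  show "Jop N TL TR K f \<in> borel_measurable state_borel" if [measurable]: "f \<in> borel_measurable state_borel" for f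
    unfolding Jop_def[abs_def] Let_def total_rate_def rate_def
      left_jump_eq_reservoir_jump right_jump_eq_reservoir_jump by measurable
  show "Jop N TL TR K (\<lambda>y. f y + g y) x = Jop N TL TR K f x + Jop N TL TR K g x"
    if "f \<in> borel_measurable state_borel" "g \<in> borel_measurable state_borel" for f g x
    using that unfolding Jop_def Let_def left_jump_eq_reservoir_jump right_jump_eq_reservoir_jump
    by (simp add: bond_jump_add reservoir_jump_add distrib_left sum.distrib add_ac)
  show "Jop N TL TR K (\<lambda>y. c * f y) x = c * Jop N TL TR K f x"
    if "f \<in> borel_measurable state_borel" for f c x
    using that unfolding Jop_def Let_def left_jump_eq_reservoir_jump right_jump_eq_reservoir_jump
    by (simp add: bond_jump_cmult reservoir_jump_cmult distrib_left sum_distrib_left mult_ac)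
  show "Jop N TL TR K f x \<le> Jop N TL TR K g x"
    if "\<And>y. y \<in> {x. pos_state N x} \<Longrightarrow> f y \<le> g y" "x \<in> {x. pos_state N x}" for f g x
    using that N unfolding Jop_def Let_def left_jump_eq_reservoir_jump right_jump_eq_reservoir_jump
    by (intro add_mono sum_mono mult_left_mono bond_jump_mono reservoir_jump_mono) auto
  show "Jop N TL TR K (\<lambda>_. 1) x \<le> 1" if "x \<in> {x. pos_state N x}" for x
    using that TL TR by (intro Jop_le_const) (simp_all add: bond_jump_const reservoir_jump_const)
qed

lemma Jop_Vfun_le:
  assumes \<eta>: "0 < \<eta>" "\<eta> \<le> 1" and x: "pos_state N x"
  shows "Jop N TL TR K (\<lambda>y. ennreal (Vfun N \<eta> y)) x \<le> ennreal (4 / \<eta> * Vfun N \<eta> x)"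
proof -
  have V: "0 \<le> Vfun N \<eta> x" by (rule Vfun_nonneg)
  have "1 \<le> 4 / \<eta>" using \<eta> by simp
  then have stay: "Vfun N \<eta> x \<le> 4 / \<eta> * Vfun N \<eta> x"
    using mult_right_mono[OF _ V] by fastforce
  have "2 / \<eta> * Vfun N \<eta> x \<le> 4 / \<eta> * Vfun N \<eta> x"
    using \<eta> V by (intro mult_right_mono divide_right_mono) auto
  then have reservoir: "reservoir_jump j T (\<lambda>y. ennreal (Vfun N \<eta> y)) x \<le> ennreal (4 / \<eta> * Vfun N \<eta> x)"
    if "j < N" "0 < T" for j T
    using reservoir_jump_Vfun_le[OF \<eta> x that] by (auto intro: order_trans ennreal_leI)
  show ?thesis
    using N TL TR stay
    by (intro Jop_le_const x bond_jump_Vfun_le[OF \<eta> x] reservoir ennreal_leI) auto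
qed

lemma Pt_sub_markov:
  assumes h: "0 \<le> h"
  shows "sub_markov_operator (Pt N TL TR K h) state_borel {x. pos_state N x}"
proof -
  interpret J: sub_markov_operator "Jop N TL TR K" state_borel "{x. pos_state N x}"
    by (rule Jop_sub_markov)
  define a where "a = unif_const N K * h"
  have a: "0 \<le> a" using h K by (simp add: a_def unif_const_def)
  have "(\<lambda>k. exp (- a) * a ^ k / fact k) sums 1"
    using poisson_weights_sums[of a 1] by (simp flip: exp_add)
  then show ?thesis
    unfolding Pt_eq_mixture a_def[symmetric] using a
    by (intro J.funpow_mixture) (auto simp: sums_iff)
qed

lemma Pt_Vfun_le:
  assumes h: "0 \<le> h" and \<eta>: "0 < \<eta>" "\<eta> \<le> 1" and x: "pos_state N x"
  defines "a \<equiv> unif_const N K * h"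
  shows "Pt N TL TR K h (\<lambda>y. ennreal (Vfun N \<eta> y)) x
           \<le> ennreal (exp (- a) * exp (4 / \<eta> * a) * Vfun N \<eta> x)"
proof -
  interpret J: sub_markov_operator "Jop N TL TR K" state_borel "{x. pos_state N x}"
    by (rule Jop_sub_markov)
  have a: "0 \<le> a" using h K by (simp add: a_def unif_const_def)
  have "Pt N TL TR K h (\<lambda>y. ennreal (Vfun N \<eta> y)) x
      \<le> (\<Sum>k. ennreal (exp (- a) * a ^ k / fact k) * ennreal (4 / \<eta>) ^ k) * ennreal (Vfun N \<eta> x)"
    unfolding Pt_eq_mixture a_def[symmetric]
  proof (rule J.funpow_mixture_linear_bound)
    show "Jop N TL TR K (\<lambda>y. ennreal (Vfun N \<eta> y)) y \<le> ennreal (4 / \<eta>) * ennreal (Vfun N \<eta> y)"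
      if "y \<in> {x. pos_state N x}" for y
      using Jop_Vfun_le[OF \<eta>, of y] that \<eta> Vfun_nonneg[of N \<eta> y]
      by (subst ennreal_mult[symmetric]) auto
  qed (use x in auto)
  also have "(\<Sum>k. ennreal (exp (- a) * a ^ k / fact k) * ennreal (4 / \<eta>) ^ k)
      = ennreal (exp (- a) * exp (4 / \<eta> * a))"
    using poisson_weights_sums[of a "4 / \<eta>"] a \<eta>
    by (simp add: ennreal_power suminf_ennreal2 sums_iff flip: ennreal_mult)
  finally show ?thesis
    using Vfun_nonneg[of N \<eta> x] by (simp add: ennreal_mult)
qed

lemma return_moment_bound:
  assumes \<eta>: "0 < \<eta>" "\<eta> < 1/2" and h: "0 \<le> h" and M0: "1 < M0" and c0: "0 < c0"
    and drift: "\<forall>x. pos_state N x \<longrightarrow> Vfun N \<eta> x > M0 \<longrightarrow>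
      Pt N TL TR K h (\<lambda>y. ennreal (Vfun N \<eta> y)) x
        + ennreal (c0 * Vfun N \<eta> x powr (1 - 1 / (2 * (1 - \<eta>)))) \<le> ennreal (Vfun N \<eta> x)"
  shows "\<exists>C5::real.
    (\<forall>x. pos_state N x \<longrightarrow>
       return_moment (Pt N TL TR K h) {y. Vfun N \<eta> y \<le> M0} (2 - 2 * \<eta>) x
         \<le> ennreal (C5 * max (Vfun N \<eta> x) 1)) \<and>
    (\<forall>x. pos_state N x \<longrightarrow> Vfun N \<eta> x \<le> M0 \<longrightarrow>
       return_moment (Pt N TL TR K h) {y. Vfun N \<eta> y \<le> M0} (2 - 2 * \<eta>) x
         \<le> ennreal (C5 * M0))"
proof -
  define a where "a = unif_const N K * h"
  interpret polynomial_drift "Pt N TL TR K h" state_borel "{x. pos_state N x}"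
    "{y. Vfun N \<eta> y \<le> M0}" "Vfun N \<eta>" "2 - 2 * \<eta>" c0 "exp (- a) * exp (4 / \<eta> * a)"
  proof (intro polynomial_drift.intro return_to_set.intro Pt_sub_markov h; unfold_locales)
    have "{y \<in> space state_borel. Vfun N \<eta> y \<le> M0} \<in> sets state_borel" by measurable
    then show "{y. Vfun N \<eta> y \<le> M0} \<in> sets state_borel" by simp
    show "Pt N TL TR K h (\<lambda>y. ennreal (Vfun N \<eta> y)) x \<le> ennreal (exp (- a) * exp (4 / \<eta> * a) * Vfun N \<eta> x)"
      if "x \<in> {x. pos_state N x}" for x
      using Pt_Vfun_le[OF h, of \<eta> x] that \<eta> by (simp add: a_def)
    show "Pt N TL TR K h (\<lambda>y. ennreal (Vfun N \<eta> y)) x + ennreal (c0 * Vfun N \<eta> x powr (1 - 1 / (2 - 2 * \<eta>)))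
        \<le> ennreal (Vfun N \<eta> x)"
      if "x \<in> {x. pos_state N x}" "x \<notin> {y. Vfun N \<eta> y \<le> M0}" for x
      using drift that by (simp add: algebra_simps)
  qed (use \<eta> M0 c0 in \<open>auto simp: Vfun_nonneg\<close>)
  obtain C where C: "0 \<le> C"
    "\<And>x. pos_state N x \<Longrightarrow> return_moment (Pt N TL TR K h) {y. Vfun N \<eta> y \<le> M0} (2 - 2 * \<eta>) x
       \<le> ennreal (C * max (Vfun N \<eta> x) 1)"
    using return_moment_le by auto
  have "ennreal (C * max (Vfun N \<eta> x) 1) \<le> ennreal (C * M0)" if "Vfun N \<eta> x \<le> M0" for x
    using that M0 C(1) by (intro ennreal_leI mult_left_mono) auto
  with C(2) show ?thesis by (blast intro: order_trans)
qed

end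

theorem proposition5p2:
  fixes N :: nat and TL TR :: real
  assumes "N \<ge> 1" and "TL > 0" and "TR > 0"
  shows "\<exists>K0. \<forall>K\<ge>K0. \<exists>\<eta>0>0. \<forall>\<eta>. 0 < \<eta> \<and> \<eta> < \<eta>0 \<longrightarrow>
    (\<exists>h0>0. \<forall>h. 0 < h \<and> h < h0 \<longrightarrow>
      (\<forall>M0 c0. M0 > 1 \<longrightarrow> c0 > 0 \<longrightarrow>
        (\<forall>x. pos_state N x \<longrightarrow> Vfun N \<eta> x > M0 \<longrightarrow>
           Pt N TL TR K h (\<lambda>y. ennreal (Vfun N \<eta> y)) x
             + ennreal (c0 * Vfun N \<eta> x powr (1 - 1 / (2 * (1 - \<eta>))))
           \<le> ennreal (Vfun N \<eta> x)) \<longrightarrow>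
        (\<exists>C5::real.
          (\<forall>x. pos_state N x \<longrightarrow>
             return_moment (Pt N TL TR K h) {y. Vfun N \<eta> y \<le> M0} (2 - 2 * \<eta>) x
               \<le> ennreal (C5 * max (Vfun N \<eta> x) 1)) \<and>
          (\<forall>x. pos_state N x \<longrightarrow> Vfun N \<eta> x \<le> M0 \<longrightarrow>
             return_moment (Pt N TL TR K h) {y. Vfun N \<eta> y \<le> M0} (2 - 2 * \<eta>) x
               \<le> ennreal (C5 * M0)))))"
proof -
  have model: "energy_exchange N TL TR K" if "1 \<le> K" for K
    using assms that by unfold_locales auto
  (* Any K > 0, any eta < 1/2 (so that the moment exponent 2 - 2 eta exceeds 1) and any h > 0
     will do. *)
  show ?thesis
    apply (rule exI[of _ 1], intro allI impI)
    apply (rule exI[of _ "1/2"], intro conjI allI impI, simp)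
    apply (rule exI[of _ 1], intro conjI allI impI, simp)
    apply (rule energy_exchange.return_moment_bound[OF model])
    apply auto
    done
qed

end
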